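(* Let $A$ be an associative algebra and $\{ r_\alpha \}_{\alpha \in \Omega}\subset A\otimes A$ a skew-symmetric associative Yang-Baxter family of type-II, with $r_\alpha=\sum r^{(1)}_\alpha\otimes r^{(2)}_\alpha$. Then the collection $\{ T_\alpha : A^{*} \to A \}_{\alpha \in \Omega}$, $T_\alpha(f) = \sum f (r^{(2)}_\alpha ) r^{(1)}_\alpha$, is an $\mathcal{O}$-operator family on the coadjoint bimodule $A^*$ over $A$, i.e. $T_\alpha(f)\cdot T_\beta(g) = T_{\alpha\beta}\big(T_\alpha(f)\cdot g + f\cdot T_\beta(g)\big)$ for all $f,g\in A^*$, $\alpha,\beta\in\Omega$.
   Context: $\Omega$ is a semigroup. For $r_\alpha=\sum r^{(1)}_\alpha\otimes r^{(2)}_\alpha\in A^{\otimes 2}$ set $r^{12}_\alpha = \sum r^{(1)}_\alpha \otimes r^{(2)}_\alpha \otimes 1$, $r^{13}_\alpha = \sum r^{(1)}_\alpha \otimes 1 \otimes r^{(2)}_\alpha$, $r^{23}_\alpha = \sum 1 \otimes r^{(1)}_\alpha \otimes r^{(2)}_\alpha$ in $A^{\otimes 3}$ (or $(A^+)^{\otimes 3}$, $A^+ = A\oplus\mathbf{k}$ the unitization, if $A$ is non-unital), with componentwise product. $\{r_\alpha\}$ is an associative Yang-Baxter family of type-II if $r^{13}_\alpha r^{12}_\beta - r^{12}_{\alpha \beta} r^{23}_\alpha + r^{23}_\beta r^{13}_{\alpha \beta}=0$ for all $\alpha,\beta\in\Omega$; it is skew-symmetric if $\sum r^{(1)}_\alpha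 \otimes r^{(2)}_\alpha = -\sum r^{(2)}_\alpha \otimes r^{(1)}_\alpha$ for each $\alpha$. The coadjoint $A$-bimodule $A^*$ has actions $(a \cdot f)(b)=f(b \cdot a)$ and $(f \cdot a)(b)=f(a \cdot b)$. *)

theory Defs
  imports Complex_Main
begin

definition assoc_algebra :: "('k::field \<Rightarrow> 'a::ring \<Rightarrow> 'a) \<Rightarrow> bool" where
  "assoc_algebra sc \<longleftrightarrow> Vector_Spaces.vector_space sc \<and>
     (\<forall>c x y. sc c (x * y) = sc c x * y \<and> sc c (x * y) = x * sc c y)"

definition lin_fun :: "('k::field \<Rightarrow> 'a::ring \<Rightarrow> 'a) \<Rightarrow> ('a \<Rightarrow> 'k) \<Rightarrow> bool" where
  "lin_fun sc f \<longleftrightarrow> Vector_Spaces.linear sc (*) f"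

(* Tensors in A\<otimes>A are given as finite sums \<Sum> x_i \<otimes> y_i (lists of pairs);
   tensors in A\<otimes>A\<otimes>A as lists of triples.  Equality in the tensor product over a field
   is detected by evaluation against all products of linear functionals. *)
definition eval2 :: "('a \<Rightarrow> 'k::field) \<Rightarrow> ('a \<Rightarrow> 'k) \<Rightarrow> ('a \<times> 'a) list \<Rightarrow> 'k" where
  "eval2 \<phi> \<psi> t = (\<Sum>(x, y) \<leftarrow> t. \<phi> x * \<psi> y)"

definition eval3 :: "('a \<Rightarrow> 'k::field) \<Rightarrow> ('a \<Rightarrow> 'k) \<Rightarrow> ('a \<Rightarrow> 'k) \<Rightarrow> ('a \<times> 'a \<times> 'a) list \<Rightarrow> 'k" where
  "eval3 \<phi>1 \<phi>2 \<phi>3 t = (\<Sum>(x, y, z) \<leftarrow> t. \<phi>1 x * \<phi>2 y * \<phi>3 z)"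

definition tensor2_eq :: "('k::field \<Rightarrow> 'a::ring \<Rightarrow> 'a) \<Rightarrow> ('a \<times> 'a) list \<Rightarrow> ('a \<times> 'a) list \<Rightarrow> bool" where
  "tensor2_eq sc s t \<longleftrightarrow>
     (\<forall>\<phi> \<psi>. lin_fun sc \<phi> \<longrightarrow> lin_fun sc \<psi> \<longrightarrow> eval2 \<phi> \<psi> s = eval2 \<phi> \<psi> t)"

definition tensor3_eq :: "('k::field \<Rightarrow> 'a::ring \<Rightarrow> 'a) \<Rightarrow> ('a \<times> 'a \<times> 'a) list \<Rightarrow> ('a \<times> 'a \<times> 'a) list \<Rightarrow> bool" where
  "tensor3_eq sc s t \<longleftrightarrow>
     (\<forall>\<phi>1 \<phi>2 \<phi>3. lin_fun sc \<phi>1 \<longrightarrow> lin_fun sc \<phi>2 \<longrightarrow> lin_fun sc \<phi>3 \<longrightarrow>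
        eval3 \<phi>1 \<phi>2 \<phi>3 s = eval3 \<phi>1 \<phi>2 \<phi>3 t)"

definition tensor3_neg :: "('a::ring \<times> 'a \<times> 'a) list \<Rightarrow> ('a \<times> 'a \<times> 'a) list" where
  "tensor3_neg t = map (\<lambda>(x, y, z). (- x, y, z)) t"

(* componentwise products, with the unit 1 of A^+ absorbed:
   r^13 s^12 = \<Sum> a a' \<otimes> b' \<otimes> b          (r = \<Sum> a\<otimes>b, s = \<Sum> a'\<otimes>b')
   r^12 s^23 = \<Sum> a \<otimes> b a' \<otimes> b'
   r^23 s^13 = \<Sum> a' \<otimes> a \<otimes> b b'        *)
definition prod_13_12 :: "('a::ring \<times> 'a) list \<Rightarrow> ('a \<times> 'a) list \<Rightarrow> ('a \<times> 'a \<times> 'a) list" where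
  "prod_13_12 r s = concat (map (\<lambda>(a, b). map (\<lambda>(a', b'). (a * a', b', b)) s) r)"

definition prod_12_23 :: "('a::ring \<times> 'a) list \<Rightarrow> ('a \<times> 'a) list \<Rightarrow> ('a \<times> 'a \<times> 'a) list" where
  "prod_12_23 r s = concat (map (\<lambda>(a, b). map (\<lambda>(a', b'). (a, b * a', b')) s) r)"

definition prod_23_13 :: "('a::ring \<times> 'a) list \<Rightarrow> ('a \<times> 'a) list \<Rightarrow> ('a \<times> 'a \<times> 'a) list" where
  "prod_23_13 r s = concat (map (\<lambda>(a, b). map (\<lambda>(a', b'). (a', a, b * b')) s) r)"

definition AYB_family_II :: "('k::field \<Rightarrow> 'a::ring \<Rightarrow> 'a) \<Rightarrow> ('w::semigroup_mult \<Rightarrow> ('a \<times> 'a) list) \<Rightarrow> bool" where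
  "AYB_family_II sc r \<longleftrightarrow> (\<forall>\<alpha> \<beta>.
     tensor3_eq sc
       (prod_13_12 (r \<alpha>) (r \<beta>) @ tensor3_neg (prod_12_23 (r (\<alpha> * \<beta>)) (r \<alpha>))
          @ prod_23_13 (r \<beta>) (r (\<alpha> * \<beta>)))
       [])"

definition skew_family :: "('k::field \<Rightarrow> 'a::ring \<Rightarrow> 'a) \<Rightarrow> ('w \<Rightarrow> ('a \<times> 'a) list) \<Rightarrow> bool" where
  "skew_family sc r \<longleftrightarrow> (\<forall>\<alpha>. tensor2_eq sc (r \<alpha>) (map (\<lambda>(x, y). (- y, x)) (r \<alpha>)))"

definition T_op :: "('k::field \<Rightarrow> 'a::ring \<Rightarrow> 'a) \<Rightarrow> ('a \<times> 'a) list \<Rightarrow> ('a \<Rightarrow> 'k) \<Rightarrow> 'a" where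
  "T_op sc r f = (\<Sum>(x, y) \<leftarrow> r. sc (f y) x)"

definition coadj_left :: "'a::ring \<Rightarrow> ('a \<Rightarrow> 'k) \<Rightarrow> ('a \<Rightarrow> 'k)" where
  "coadj_left a f = (\<lambda>b. f (b * a))"

definition coadj_right :: "('a::ring \<Rightarrow> 'k) \<Rightarrow> 'a \<Rightarrow> ('a \<Rightarrow> 'k)" where
  "coadj_right f a = (\<lambda>b. f (a * b))"

definition O_operator_family_coadj ::
  "('k::field \<Rightarrow> 'a::ring \<Rightarrow> 'a) \<Rightarrow> ('w::semigroup_mult \<Rightarrow> ('a \<Rightarrow> 'k) \<Rightarrow> 'a) \<Rightarrow> bool" where
  "O_operator_family_coadj sc T \<longleftrightarrow> (\<forall>\<alpha> \<beta> f g. lin_fun sc f \<longrightarrow> lin_fun sc g \<longrightarrow>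
     T \<alpha> f * T \<beta> g = T (\<alpha> * \<beta>) (\<lambda>b. coadj_left (T \<alpha> f) g b + coadj_right f (T \<beta> g) b))"

end

theory Submission
  imports Defs
begin

text \<open>Both sides of the \<open>\<O>\<close>-operator identity are compared by pairing them with an arbitrary
  linear functional \<open>\<phi>\<close>, which suffices because linear functionals separate the points of a vector
  space. Paired with \<open>\<phi>\<close>, the product \<open>T\<^sub>\<alpha>(f) T\<^sub>\<beta>(g)\<close> becomes the evaluation of
  \<open>r\<^sup>1\<^sup>3\<^sub>\<alpha> r\<^sup>1\<^sup>2\<^sub>\<beta>\<close> against \<open>\<phi> \<otimes> g \<otimes> f\<close>, the term \<open>T\<^sub>\<alpha>\<^sub>\<beta>(T\<^sub>\<alpha>(f)\<cdot>g)\<close> that of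
  \<open>r\<^sup>1\<^sup>2\<^sub>\<alpha>\<^sub>\<beta> r\<^sup>2\<^sup>3\<^sub>\<alpha>\<close>, and the term \<open>T\<^sub>\<alpha>\<^sub>\<beta>(f\<cdot>T\<^sub>\<beta>(g))\<close>, after using skew-symmetry of \<open>r\<^sub>\<beta>\<close>
  to swap the roles of \<open>g\<close> and \<open>f\<close>, that of \<open>-r\<^sup>2\<^sup>3\<^sub>\<beta> r\<^sup>1\<^sup>3\<^sub>\<alpha>\<^sub>\<beta>\<close>. The associative
  Yang-Baxter equation of type II says exactly that these three evaluations cancel.\<close>

lemma sum_list_concat: "sum_list (concat xss) = (\<Sum>xs\<leftarrow>xss. sum_list xs)"
  by (induct xss) auto

lemma sum_list_commute:
  "(\<Sum>x\<leftarrow>xs. \<Sum>y\<leftarrow>ys. f x y) = (\<Sum>y\<leftarrow>ys. \<Sum>x\<leftarrow>xs. (f x y :: 'b::comm_monoid_add))"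
  by (induct xs) (auto simp: sum_list_addf)

lemma lin_fun_module_hom: "lin_fun sc \<phi> \<Longrightarrow> module_hom sc (*) \<phi>"
  unfolding lin_fun_def by (rule module_hom_linearI)

lemma lin_fun_sum_list:
  assumes "lin_fun sc \<phi>"
  shows "\<phi> (\<Sum>x\<leftarrow>xs. h x) = (\<Sum>x\<leftarrow>xs. \<phi> (h x))"
  by (induct xs) (auto simp: module_hom.add[OF lin_fun_module_hom[OF assms]]
      module_hom.zero[OF lin_fun_module_hom[OF assms]])

lemma linear_functionals_separate:
  fixes sc :: "'k::field \<Rightarrow> 'a::ring \<Rightarrow> 'a"
  assumes vs: "Vector_Spaces.vector_space sc" and sep: "\<And>\<phi>. lin_fun sc \<phi> \<Longrightarrow> \<phi> x = \<phi> y"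
  shows "x = y"
proof (rule ccontr)
  assume "x \<noteq> y"
  have "Vector_Spaces.vector_space ((*) :: 'k \<Rightarrow> 'k \<Rightarrow> 'k)"
    unfolding vector_space_def module_def by (auto simp: algebra_simps)
  then interpret vector_space_pair sc "(*) :: 'k \<Rightarrow> 'k \<Rightarrow> 'k"
    using vs by (simp add: vector_space_pair_def)
  have "vs1.independent {x - y}"
    using \<open>x \<noteq> y\<close> by simp
  from linear_independent_extend[OF this, of "\<lambda>_. 1"]
  obtain \<phi> where \<phi>: "lin_fun sc \<phi>" "\<phi> (x - y) = 1"
    unfolding lin_fun_def by auto
  with sep[OF \<phi>(1)] show False
    by (simp add: module_hom.diff[OF lin_fun_module_hom])
qed

lemma lin_fun_mult_left:
  assumes "assoc_algebra sc" "lin_fun sc f"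
  shows "lin_fun sc (\<lambda>x. f (b * x))"
  using assms unfolding lin_fun_def Vector_Spaces.linear_iff assoc_algebra_def
  by (auto simp: distrib_left) metis

lemma lin_fun_mult_right:
  assumes "assoc_algebra sc" "lin_fun sc f"
  shows "lin_fun sc (\<lambda>x. f (x * b))"
  using assms unfolding lin_fun_def Vector_Spaces.linear_iff assoc_algebra_def
  by (auto simp: distrib_right) metis

lemma eval2_skew:
  assumes "tensor2_eq sc t (map (\<lambda>(x, y). (- y, x)) t)" "lin_fun sc \<phi>" "lin_fun sc \<psi>"
  shows "eval2 \<phi> \<psi> t = - eval2 \<psi> \<phi> t"
proof -
  have "eval2 \<phi> \<psi> t = eval2 \<phi> \<psi> (map (\<lambda>(x, y). (- y, x)) t)"
    using assms unfolding tensor2_eq_def by blast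
  then show ?thesis
    by (simp add: eval2_def o_def case_prod_unfold module_hom.neg[OF lin_fun_module_hom[OF assms(2)]]
        uminus_sum_list_map mult.commute)
qed

lemma eval3_append: "eval3 \<phi>1 \<phi>2 \<phi>3 (s @ t) = eval3 \<phi>1 \<phi>2 \<phi>3 s + eval3 \<phi>1 \<phi>2 \<phi>3 t"
  by (simp add: eval3_def)

lemma eval3_tensor3_neg:
  assumes "lin_fun sc \<phi>1"
  shows "eval3 \<phi>1 \<phi>2 \<phi>3 (tensor3_neg t) = - eval3 \<phi>1 \<phi>2 \<phi>3 t"
  by (simp add: eval3_def tensor3_neg_def o_def case_prod_unfold uminus_sum_list_map
      module_hom.neg[OF lin_fun_module_hom[OF assms]])

lemma eval3_prod_13_12:
  "eval3 \<phi>1 \<phi>2 \<phi>3 (prod_13_12 r s) = (\<Sum>(a, b)\<leftarrow>r. \<Sum>(a', b')\<leftarrow>s. \<phi>1 (a * a') * \<phi>2 b' * \<phi>3 b)"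
  by (simp add: eval3_def prod_13_12_def map_concat sum_list_concat o_def case_prod_unfold)

lemma eval3_prod_12_23:
  "eval3 \<phi>1 \<phi>2 \<phi>3 (prod_12_23 r s) = (\<Sum>(a, b)\<leftarrow>r. \<Sum>(a', b')\<leftarrow>s. \<phi>1 a * \<phi>2 (b * a') * \<phi>3 b')"
  by (simp add: eval3_def prod_12_23_def map_concat sum_list_concat o_def case_prod_unfold)

lemma eval3_prod_23_13:
  "eval3 \<phi>1 \<phi>2 \<phi>3 (prod_23_13 r s) = (\<Sum>(a, b)\<leftarrow>r. \<Sum>(a', b')\<leftarrow>s. \<phi>1 a' * \<phi>2 a * \<phi>3 (b * b'))"
  by (simp add: eval3_def prod_23_13_def map_concat sum_list_concat o_def case_prod_unfold)

lemma AYB_family_II_eval3: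
  assumes "AYB_family_II sc r" "lin_fun sc \<phi>1" "lin_fun sc \<phi>2" "lin_fun sc \<phi>3"
  shows "eval3 \<phi>1 \<phi>2 \<phi>3 (prod_13_12 (r \<alpha>) (r \<beta>)) - eval3 \<phi>1 \<phi>2 \<phi>3 (prod_12_23 (r (\<alpha> * \<beta>)) (r \<alpha>))
      + eval3 \<phi>1 \<phi>2 \<phi>3 (prod_23_13 (r \<beta>) (r (\<alpha> * \<beta>))) = 0"
proof -
  have "eval3 \<phi>1 \<phi>2 \<phi>3 (prod_13_12 (r \<alpha>) (r \<beta>) @ tensor3_neg (prod_12_23 (r (\<alpha> * \<beta>)) (r \<alpha>))
      @ prod_23_13 (r \<beta>) (r (\<alpha> * \<beta>))) = eval3 \<phi>1 \<phi>2 \<phi>3 []"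
    using assms unfolding AYB_family_II_def tensor3_eq_def by blast
  then show ?thesis
    unfolding eval3_append eval3_tensor3_neg[OF assms(2)] by (simp add: eval3_def algebra_simps)
qed

lemma T_op_add:
  assumes "Vector_Spaces.vector_space sc"
  shows "T_op sc t (\<lambda>b. f b + g b) = T_op sc t f + T_op sc t g"
  by (simp add: T_op_def case_prod_unfold sum_list_addf
      vector_space.vector_space_assms(2)[OF assms])

lemma lin_fun_T_op:
  assumes "lin_fun sc \<phi>"
  shows "\<phi> (T_op sc t f) = eval2 \<phi> f t"
  by (simp add: T_op_def eval2_def lin_fun_sum_list[OF assms] case_prod_unfold
      module_hom.scale[OF lin_fun_module_hom[OF assms]] mult.commute)

lemma T_op_mult:
  assumes "assoc_algebra sc"
  shows "T_op sc r f * T_op sc s g = (\<Sum>(a, b)\<leftarrow>r. \<Sum>(a', b')\<leftarrow>s. sc (f b * g b') (a * a'))"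
proof -
  have "sc c x * sc d y = sc (c * d) (x * y)" for c d x y
    using assms unfolding assoc_algebra_def
    by (metis vector_space.vector_space_assms(3))
  then show ?thesis
    unfolding T_op_def
    by (simp add: sum_list_mult_const[symmetric] sum_list_const_mult[symmetric] case_prod_unfold)
      (rule sum_list_commute)
qed

lemma lin_fun_T_op_mult:
  assumes "assoc_algebra sc" "lin_fun sc \<phi>"
  shows "\<phi> (T_op sc r f * T_op sc s g) = eval3 \<phi> g f (prod_13_12 r s)"
  by (simp add: T_op_mult[OF assms(1)] eval3_prod_13_12 lin_fun_sum_list[OF assms(2)]
      case_prod_unfold module_hom.scale[OF lin_fun_module_hom[OF assms(2)]] mult_ac)

lemma lin_fun_T_op_coadj_left:
  assumes "assoc_algebra sc" "lin_fun sc \<phi>" "lin_fun sc g"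
  shows "\<phi> (T_op sc t (coadj_left (T_op sc r f) g)) = eval3 \<phi> g f (prod_12_23 t r)"
proof -
  have "g (b * T_op sc r f) = eval2 (\<lambda>x. g (b * x)) f r" for b
    using lin_fun_T_op[OF lin_fun_mult_left[OF assms(1,3)]] .
  then show ?thesis
    by (simp add: lin_fun_T_op[OF assms(2)] coadj_left_def eval2_def eval3_prod_12_23
        case_prod_unfold sum_list_const_mult[symmetric] mult_ac)
qed

lemma lin_fun_T_op_coadj_right:
  assumes "assoc_algebra sc" "lin_fun sc \<phi>" "lin_fun sc f" "lin_fun sc g"
    and skew: "tensor2_eq sc s (map (\<lambda>(x, y). (- y, x)) s)"
  shows "\<phi> (T_op sc t (coadj_right f (T_op sc s g))) = - eval3 \<phi> g f (prod_23_13 s t)"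
proof -
  have f_right: "lin_fun sc (\<lambda>x. f (x * b))" for b
    using lin_fun_mult_right[OF assms(1,3)] .
  have "f (T_op sc s g * b) = - eval2 g (\<lambda>x. f (x * b)) s" for b
    using lin_fun_T_op[OF f_right] eval2_skew[OF skew f_right assms(4)] by simp
  then have "\<phi> (T_op sc t (coadj_right f (T_op sc s g)))
      = - (\<Sum>(a', b')\<leftarrow>t. \<Sum>(a, b)\<leftarrow>s. \<phi> a' * g a * f (b * b'))"
    by (simp add: lin_fun_T_op[OF assms(2)] coadj_right_def eval2_def case_prod_unfold
        sum_list_const_mult[symmetric] uminus_sum_list_map o_def mult_ac)
  also have "\<dots> = - eval3 \<phi> g f (prod_23_13 s t)"
    unfolding eval3_prod_23_13 case_prod_unfold by (rule arg_cong[of _ _ uminus] sum_list_commute)+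
  finally show ?thesis .
qed

theorem proposition2p21:
  fixes sc :: "'k::field \<Rightarrow> 'a::ring \<Rightarrow> 'a"
    and r :: "'w::semigroup_mult \<Rightarrow> ('a \<times> 'a) list"
  assumes "assoc_algebra sc"
    and "AYB_family_II sc r"
    and "skew_family sc r"
  shows "O_operator_family_coadj sc (\<lambda>\<alpha> f. T_op sc (r \<alpha>) f)"
  unfolding O_operator_family_coadj_def
proof (intro allI impI)
  fix \<alpha> \<beta> :: 'w and f g :: "'a \<Rightarrow> 'k"
  assume f: "lin_fun sc f" and g: "lin_fun sc g"
  have vs: "Vector_Spaces.vector_space sc"
    using assms(1) unfolding assoc_algebra_def by simp
  have skew: "tensor2_eq sc (r \<beta>) (map (\<lambda>(x, y). (- y, x)) (r \<beta>))"
    using assms(3) unfolding skew_family_def by simp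
  show "T_op sc (r \<alpha>) f * T_op sc (r \<beta>) g = T_op sc (r (\<alpha> * \<beta>))
      (\<lambda>b. coadj_left (T_op sc (r \<alpha>) f) g b + coadj_right f (T_op sc (r \<beta>) g) b)"
    unfolding T_op_add[OF vs]
  proof (rule linear_functionals_separate[OF vs])
    fix \<phi> assume \<phi>: "lin_fun sc \<phi>"
    show "\<phi> (T_op sc (r \<alpha>) f * T_op sc (r \<beta>) g) = \<phi> (T_op sc (r (\<alpha> * \<beta>)) (coadj_left (T_op sc (r \<alpha>) f) g)
        + T_op sc (r (\<alpha> * \<beta>)) (coadj_right f (T_op sc (r \<beta>) g)))"
      using AYB_family_II_eval3[OF assms(2) \<phi> g f, of \<alpha> \<beta>]
      by (simp add: module_hom.add[OF lin_fun_module_hom[OF \<phi>]] lin_fun_T_op_mult[OF assms(1) \<phi>]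
          lin_fun_T_op_coadj_left[OF assms(1) \<phi> g] lin_fun_T_op_coadj_right[OF assms(1) \<phi> f g skew] algebra_simps)
  qed
qed

end
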